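(* Let $f:\mathbb{R}^n\to\mathbb{R}^n$ be continuously differentiable, $b_0\in\mathbb{R}^n_{\ge0}$, $\mu,\theta>0$, $r:=\mu/\theta$, and let $x^*\in\mathbb{R}^n_{\ge0}$, $u_*>0$ satisfy $x^*_n=r$ and $f(x^* )-u_*re_n+b_0=0$. Assume that the Jacobian $J:=\partial f/\partial x(x^* )$ is Metzler and Hurwitz stable. Then for all $\eta,k_p>0$ the equilibrium $\big(x^*,\ \mu/(\eta u_* ),\ u_*/k_p\big)$ of $\dot x=f(x)-k_px_nz_2e_n+b_0$, $\dot z_1=\mu-\eta k_pz_1z_2$, $\dot z_2=\theta x_n-\eta k_pz_1z_2$ is locally exponentially stable.
   Context: $e_i$ standard basis vectors; $x_n=e_n^Tx$. Metzler: all off-diagonal entries nonnegative (this holds for instance when $f$ is cooperative). Hurwitz stable: all eigenvalues have negative real part. An equilibrium is called locally exponentially stable here if the Jacobian matrix of the vector field at the equilibrium is Hurwitz stable. *)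

theory Defs
  imports "HOL-Analysis.Analysis"
begin

text \<open>Complex eigenvalue of a real linear map L on a real vector space:
  lambda is an eigenvalue of the complexification, i.e. L(u + i v) = lambda (u + i v)
  for some nonzero complex vector u + i v, written in real and imaginary parts.\<close>
definition complex_eigenvalue :: "('a::real_vector \<Rightarrow> 'a) \<Rightarrow> complex \<Rightarrow> bool" where
  "complex_eigenvalue L lam \<longleftrightarrow>
     (\<exists>u v. (u \<noteq> 0 \<or> v \<noteq> 0) \<and>
        L u = Re lam *\<^sub>R u - Im lam *\<^sub>R v \<and>
        L v = Im lam *\<^sub>R u + Re lam *\<^sub>R v)"

definition hurwitz_lin :: "('a::real_vector \<Rightarrow> 'a) \<Rightarrow> bool" where
  "hurwitz_lin L \<longleftrightarrow> (\<forall>lam. complex_eigenvalue L lam \<longrightarrow> Re lam < 0)"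

definition hurwitz_mat :: "real^'n^'n \<Rightarrow> bool" where
  "hurwitz_mat A \<longleftrightarrow> hurwitz_lin (\<lambda>v. A *v v)"

definition metzler :: "real^'n^'n \<Rightarrow> bool" where
  "metzler A \<longleftrightarrow> (\<forall>i j. i \<noteq> j \<longrightarrow> 0 \<le> A $ i $ j)"

definition loc_exp_stable :: "('a::euclidean_space \<Rightarrow> 'a) \<Rightarrow> 'a \<Rightarrow> bool" where
  "loc_exp_stable F xe \<longleftrightarrow> F xe = 0 \<and>
     (\<exists>F'. (F has_derivative F') (at xe) \<and> hurwitz_lin F')"

end

theory Submission
  imports Defs
begin

text \<open>Linearising at the equilibrium couples the plant Jacobian \<open>J\<close> to the controller
  through \<open>x\<^sub>n\<close> and \<open>z\<^sub>2\<close>. For an eigenvalue \<open>\<lambda>\<close> with \<open>Re \<lambda> \<ge> 0\<close> the controller equations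
  force \<open>Re (z\<^sub>2 \<cdot> conj x\<^sub>n) \<ge> 0\<close>, i.e. the antithetic controller is passive, so the feedback
  entering row \<open>n\<close> of the plant is dissipative. Taking moduli, the plant part \<open>v\<close> of the
  eigenvector then satisfies \<open>J |v| \<ge> Re \<lambda> |v| \<ge> 0\<close>. A Hurwitz Metzler matrix admits no such
  nonzero nonnegative vector: otherwise Brouwer's theorem, applied to the normalised map
  \<open>x \<mapsto> (J + c I) x\<close> on the simplex, produces a nonnegative eigenvector with a nonnegative
  eigenvalue. Hence \<open>v = 0\<close>, and then the controller part of the eigenvector vanishes too.\<close>

lemma metzler_shift_ge:
  fixes A :: "real^'n^'n"
  assumes metz: "metzler A" and c: "\<And>i. 1 - A$i$i \<le> c" and "0 \<le> x"
  shows "x \<le> A *v x + c *\<^sub>R x"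
proof -
  have "(A *v x + c *\<^sub>R x - x) $ i = (\<Sum>j\<in>UNIV. (A$i$j + (if j = i then c - 1 else 0)) * x$j)" for i
    by (simp add: matrix_vector_mult_def distrib_right sum.distrib mult_delta_left left_diff_distrib)
  also have "\<dots> i \<ge> 0" for i
    using metz c[of i] \<open>0 \<le> x\<close>
    by (intro sum_nonneg mult_nonneg_nonneg) (auto simp: metzler_def less_eq_vec_def)
  finally show ?thesis
    by (simp add: less_eq_vec_def)
qed

lemma sum_pos_of_nonneg_nonzero:
  fixes y :: "real^'n"
  assumes "0 \<le> y" "y \<noteq> 0"
  shows "0 < (\<Sum>i\<in>UNIV. y$i)"
proof -
  obtain i where "y$i \<noteq> 0"
    using assms(2) by (auto simp: vec_eq_iff)
  then show ?thesis
    using assms(1) by (intro sum_pos2[where i=i]) (auto simp: less_eq_vec_def order_less_le)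
qed

definition simplex_nonneg_image :: "real^'n^'n \<Rightarrow> (real^'n) set" where
  "simplex_nonneg_image A = {x. 0 \<le> x \<and> (\<Sum>i\<in>UNIV. x$i) = 1 \<and> 0 \<le> A *v x}"

lemma compact_simplex_nonneg_image: "compact (simplex_nonneg_image A)"
proof (rule compact_eq_bounded_closed[THEN iffD2, OF conjI])
  have "norm x \<le> 1" if "x \<in> simplex_nonneg_image A" for x
    using norm_le_l1_cart[of x] that by (simp add: simplex_nonneg_image_def less_eq_vec_def)
  then show "bounded (simplex_nonneg_image A)"
    by (auto simp: bounded_iff)
  show "closed (simplex_nonneg_image A)"
    unfolding simplex_nonneg_image_def less_eq_vec_def
    by (intro closed_Collect_conj closed_Collect_all closed_Collect_le closed_Collect_eq
        continuous_intros)
qed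

lemma convex_simplex_nonneg_image: "convex (simplex_nonneg_image A)"
  unfolding convex_def simplex_nonneg_image_def
  by (auto simp: less_eq_vec_def sum.distrib sum_distrib_left[symmetric]
      matrix_vector_right_distrib matrix_vector_mult_scaleR)

lemma metzler_nonneg_eigenvector:
  fixes A :: "real^'n^'n"
  assumes metz: "metzler A" and y: "0 \<le> y" "y \<noteq> 0" "0 \<le> A *v y"
  obtains x \<rho> where "0 \<le> x" "x \<noteq> 0" "0 \<le> \<rho>" "A *v x = \<rho> *\<^sub>R x"
proof -
  define K where "K = simplex_nonneg_image A"
  define c where "c = (\<Sum>i\<in>UNIV. \<bar>A$i$i\<bar>) + 1"
  have c: "1 - A$i$i \<le> c" for i
    using member_le_sum[of i UNIV "\<lambda>i. \<bar>A$i$i\<bar>"] by (simp add: c_def)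
  define B where "B x = A *v x + c *\<^sub>R x" for x
  define S where "S x = (\<Sum>i\<in>UNIV. B x $ i)" for x
  have B_ge: "x \<le> B x" if "0 \<le> x" for x
    unfolding B_def using metz c that by (rule metzler_shift_ge)
  have S_ge: "1 \<le> S x" if "x \<in> K" for x
    using that B_ge sum_mono[of UNIV "\<lambda>i. x$i" "\<lambda>i. B x $ i"]
    by (auto simp: K_def simplex_nonneg_image_def S_def less_eq_vec_def)
  have maps_to: "(1 / S x) *\<^sub>R B x \<in> K" if "x \<in> K" for x
  proof -
    have "0 \<le> x" "0 \<le> A *v x" "0 < S x"
      using that S_ge[OF that] by (auto simp: K_def simplex_nonneg_image_def)
    then have "0 \<le> B x" and "0 \<le> A *v B x"
      using B_ge[of x] B_ge[of "A *v x"]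
      by (auto simp: B_def matrix_vector_right_distrib matrix_vector_mult_scaleR)
    moreover have "(\<Sum>i\<in>UNIV. ((1 / S x) *\<^sub>R B x) $ i) = 1"
      using \<open>0 < S x\<close> by (simp add: S_def sum_divide_distrib[symmetric])
    ultimately show ?thesis
      using \<open>0 < S x\<close>
      by (simp add: K_def simplex_nonneg_image_def matrix_vector_mult_scaleR scaleR_nonneg_nonneg)
  qed
  have "(1 / (\<Sum>i\<in>UNIV. y$i)) *\<^sub>R y \<in> K"
    using y sum_pos_of_nonneg_nonzero[OF y(1,2)]
    by (auto simp: K_def simplex_nonneg_image_def less_eq_vec_def matrix_vector_mult_scaleR
        sum_divide_distrib[symmetric])
  then have "K \<noteq> {}" by blast
  moreover have "continuous_on K (\<lambda>x. (1 / S x) *\<^sub>R B x)"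
    using S_ge unfolding S_def B_def by (intro continuous_intros) fastforce
  ultimately obtain x where "x \<in> K" and fixed: "(1 / S x) *\<^sub>R B x = x"
    using brouwer[OF compact_simplex_nonneg_image convex_simplex_nonneg_image]
      maps_to unfolding K_def by blast
  have x: "0 \<le> x" "(\<Sum>i\<in>UNIV. x$i) = 1" "0 \<le> A *v x"
    using \<open>x \<in> K\<close> by (simp_all add: K_def simplex_nonneg_image_def)
  have "S x *\<^sub>R ((1 / S x) *\<^sub>R B x) = S x *\<^sub>R x"
    by (simp only: fixed)
  then have "A *v x = (S x - c) *\<^sub>R x"
    using S_ge[OF \<open>x \<in> K\<close>] by (simp add: B_def algebra_simps)
  moreover have "S x - c = (\<Sum>i\<in>UNIV. (A *v x)$i)"
    by (simp add: calculation x(2) sum_distrib_left[symmetric])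
  moreover have "(\<Sum>i\<in>UNIV. (A *v x)$i) \<ge> 0"
    using x(3) by (simp add: less_eq_vec_def sum_nonneg)
  moreover have "x \<noteq> 0"
    using x(2) by auto
  ultimately show thesis
    using that x(1) by simp
qed

lemma metzler_hurwitz_no_nonneg_supersolution:
  fixes A :: "real^'n^'n"
  assumes metz: "metzler A" and hur: "hurwitz_mat A" and "0 \<le> y" "0 \<le> A *v y"
  shows "y = 0"
proof (rule ccontr)
  assume "y \<noteq> 0"
  then obtain x \<rho> where "x \<noteq> 0" "0 \<le> \<rho>" "A *v x = \<rho> *\<^sub>R x"
    using metzler_nonneg_eigenvector[OF metz \<open>0 \<le> y\<close> _ \<open>0 \<le> A *v y\<close>] by blast
  then have "complex_eigenvalue (\<lambda>v. A *v v) (of_real \<rho>)"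
    unfolding complex_eigenvalue_def by (intro exI[of _ x] exI[of _ 0]) simp
  then show False
    using hur \<open>0 \<le> \<rho>\<close> by (fastforce simp: hurwitz_mat_def hurwitz_lin_def)
qed

lemma metzler_modulus_inequality:
  fixes J :: "real^'n^'n" and V :: "'n \<Rightarrow> complex"
  assumes metz: "metzler J"
    and eq: "lam * V i = (\<Sum>j\<in>UNIV. of_real (J$i$j) * V j) + w"
    and diss: "Re (w * cnj (V i)) \<le> 0"
  shows "Re lam * cmod (V i) \<le> (J *v (\<chi> j. cmod (V j))) $ i"
proof -
  have "Re lam * cmod (V i) ^ 2 = Re (lam * V i * cnj (V i))"
    by (simp add: mult.assoc complex_norm_square[symmetric])
  also have "\<dots> = (\<Sum>j\<in>UNIV. J$i$j * Re (V j * cnj (V i))) + Re (w * cnj (V i))"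
    by (simp add: eq distrib_right sum_distrib_right mult.assoc Re_sum)
  also have "\<dots> \<le> (\<Sum>j\<in>UNIV. J$i$j * (cmod (V j) * cmod (V i)))"
  proof -
    have "J$i$j * Re (V j * cnj (V i)) \<le> J$i$j * (cmod (V j) * cmod (V i))" for j
    proof (cases "j = i")
      case True
      then show ?thesis
        by (simp add: complex_norm_square[symmetric] power2_eq_square)
    next
      case False
      then have "0 \<le> J$i$j" using metz by (simp add: metzler_def)
      moreover have "Re (V j * cnj (V i)) \<le> cmod (V j) * cmod (V i)"
        by (metis complex_Re_le_cmod complex_mod_cnj norm_mult)
      ultimately show ?thesis by (rule mult_left_mono[rotated])
    qed
    then have "(\<Sum>j\<in>UNIV. J$i$j * Re (V j * cnj (V i))) \<le> (\<Sum>j\<in>UNIV. J$i$j * (cmod (V j) * cmod (V i)))"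
      by (rule sum_mono)
    with diss show ?thesis by linarith
  qed
  also have "\<dots> = cmod (V i) * (J *v (\<chi> j. cmod (V j))) $ i"
    by (simp add: matrix_vector_mult_def sum_distrib_left algebra_simps)
  finally have "cmod (V i) * (Re lam * cmod (V i)) \<le> cmod (V i) * (J *v (\<chi> j. cmod (V j))) $ i"
    by (simp add: power2_eq_square algebra_simps)
  moreover have "0 \<le> (J *v (\<chi> j. cmod (V j))) $ i" if "V i = 0"
    unfolding matrix_vector_mult_def vec_lambda_beta
    by (rule sum_nonneg) (metis metz metzler_def that mult_nonneg_nonneg norm_ge_zero mult_zero_right norm_zero)
  ultimately show ?thesis
    by (cases "V i = 0") (auto simp: mult_le_cancel_left_pos)
qed

lemma metzler_hurwitz_dissipative_forcing:
  fixes J :: "real^'n^'n" and V w :: "'n \<Rightarrow> complex"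
  assumes metz: "metzler J" and hur: "hurwitz_mat J" and lam: "0 \<le> Re lam"
    and eq: "\<And>i. lam * V i = (\<Sum>j\<in>UNIV. of_real (J$i$j) * V j) + w i"
    and diss: "\<And>i. Re (w i * cnj (V i)) \<le> 0"
  shows "V i = 0"
proof -
  define y where "y = (\<chi> j. cmod (V j))"
  have "0 \<le> (J *v y) $ i" for i
  proof -
    have "0 \<le> Re lam * cmod (V i)" using lam by simp
    also have "\<dots> \<le> (J *v y) $ i"
      unfolding y_def by (rule metzler_modulus_inequality[OF metz eq diss])
    finally show ?thesis .
  qed
  then have "0 \<le> J *v y" by (simp add: less_eq_vec_def)
  moreover have "0 \<le> y" by (simp add: y_def less_eq_vec_def)
  ultimately have "y = 0"
    using metzler_hurwitz_no_nonneg_supersolution[OF metz hur] by blast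
  then show ?thesis by (simp add: y_def vec_eq_iff)
qed

text \<open>The hypotheses are the real and imaginary parts of the controller's eigen-equations
  \<open>\<lambda> z\<^sub>1 = - (a z\<^sub>1 + b z\<^sub>2)\<close>, \<open>\<lambda> z\<^sub>2 = \<theta> x\<^sub>k - (a z\<^sub>1 + b z\<^sub>2)\<close> with
  \<open>\<lambda> = \<sigma> + i \<omega>\<close>, \<open>z\<^sub>1 = p1 + i q1\<close>, \<open>z\<^sub>2 = p2 + i q2\<close>, \<open>x\<^sub>k = pk + i qk\<close>;
  the conclusion is \<open>Re (z\<^sub>2 \<cdot> conj x\<^sub>k) \<ge> 0\<close>.\<close>

lemma antithetic_controller_passive:
  fixes a b \<theta> \<sigma> \<omega> p1 q1 p2 q2 pk qk :: real
  assumes "0 < a" "0 < b" "0 < \<theta>" "0 \<le> \<sigma>"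
    and "\<sigma> * p1 - \<omega> * q1 = - (a * p1 + b * p2)"
    and "\<omega> * p1 + \<sigma> * q1 = - (a * q1 + b * q2)"
    and "\<sigma> * p2 - \<omega> * q2 = \<theta> * pk - (a * p1 + b * p2)"
    and "\<omega> * p2 + \<sigma> * q2 = \<theta> * qk - (a * q1 + b * q2)"
  shows "0 \<le> p2 * pk + q2 * qk"
proof -
  have "\<theta> * b * (p2 * pk + q2 * qk) =
      \<sigma> * (b * (p2\<^sup>2 + q2\<^sup>2) + (\<sigma> + a) * (p1\<^sup>2 + q1\<^sup>2)) + \<omega>\<^sup>2 * (p1\<^sup>2 + q1\<^sup>2)"
    using assms(5-8) by algebra
  also have "\<dots> \<ge> 0"
    using assms(1-4) by (intro add_nonneg_nonneg mult_nonneg_nonneg) auto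
  finally show ?thesis
    using mult_pos_pos[OF assms(3,2)] by (simp add: zero_le_mult_iff)
qed

definition antithetic_closed_loop ::
    "(real^'n \<Rightarrow> real^'n) \<Rightarrow> 'n \<Rightarrow> real^'n \<Rightarrow> real \<Rightarrow> real \<Rightarrow> real \<Rightarrow> real \<Rightarrow>
     (real^'n) \<times> real \<times> real \<Rightarrow> (real^'n) \<times> real \<times> real" where
  "antithetic_closed_loop f k b0 \<mu> \<theta> \<eta> kp = (\<lambda>(x, z1, z2).
     (f x - (kp * x $ k * z2) *\<^sub>R axis k 1 + b0,
      \<mu> - \<eta> * kp * z1 * z2,
      \<theta> * x $ k - \<eta> * kp * z1 * z2))"

text \<open>At a point \<open>(x, z\<^sub>1, z\<^sub>2)\<close> the gains are \<open>g = k\<^sub>p z\<^sub>2\<close>, \<open>c = k\<^sub>p x\<^sub>k\<close>,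
  \<open>a = \<eta> k\<^sub>p z\<^sub>2\<close>, \<open>b = \<eta> k\<^sub>p z\<^sub>1\<close>.\<close>

definition antithetic_jacobian ::
    "(real^'n \<Rightarrow> real^'n) \<Rightarrow> 'n \<Rightarrow> real \<Rightarrow> real \<Rightarrow> real \<Rightarrow> real \<Rightarrow> real \<Rightarrow>
     (real^'n) \<times> real \<times> real \<Rightarrow> (real^'n) \<times> real \<times> real" where
  "antithetic_jacobian A k \<theta> g c a b = (\<lambda>(dx, d1, d2).
     (A dx - (g * dx $ k + c * d2) *\<^sub>R axis k 1,
      - (a * d1 + b * d2),
      \<theta> * dx $ k - (a * d1 + b * d2)))"

lemma has_derivative_antithetic_closed_loop:
  assumes "(f has_derivative A) (at x)"
  shows "(antithetic_closed_loop f k b0 \<mu> \<theta> \<eta> kp has_derivative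
          antithetic_jacobian A k \<theta> (kp * z2) (kp * x $ k) (\<eta> * kp * z2) (\<eta> * kp * z1))
         (at (x, z1, z2))"
proof -
  have "(fst has_derivative fst) (at (x, z1, z2))"
    by (rule has_derivative_fst[OF has_derivative_ident])
  from has_derivative_compose[OF this, of f A] assms
  have plant: "((\<lambda>p. f (fst p)) has_derivative (\<lambda>d. A (fst d))) (at (x, z1, z2))"
    by simp
  have measured: "((\<lambda>p. fst p $ k) has_derivative (\<lambda>d. fst d $ k)) (at (x, z1, z2))"
    by (rule bounded_linear.has_derivative[OF bounded_linear_vec_nth has_derivative_fst[OF has_derivative_ident]])
  show ?thesis
    unfolding antithetic_closed_loop_def antithetic_jacobian_def case_prod_beta'
    by (rule has_derivative_eq_rhs, (rule plant measured derivative_intros)+)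
       (simp add: fun_eq_iff algebra_simps)
qed

lemma hurwitz_antithetic_jacobian:
  fixes J :: "real^'n^'n"
  assumes metz: "metzler J" and hur: "hurwitz_mat J"
    and gains: "0 < \<theta>" "0 < g" "0 < c" "0 < a" "0 < b"
  shows "hurwitz_lin (antithetic_jacobian (\<lambda>v. J *v v) k \<theta> g c a b)"
  unfolding hurwitz_lin_def
proof (intro allI impI)
  fix lam
  assume "complex_eigenvalue (antithetic_jacobian (\<lambda>v. J *v v) k \<theta> g c a b) lam"
  then obtain pv p1 p2 qv q1 q2 where nz: "(pv, p1, p2) \<noteq> 0 \<or> (qv, q1, q2) \<noteq> 0"
    and Ep: "antithetic_jacobian (\<lambda>v. J *v v) k \<theta> g c a b (pv, p1, p2) =
      Re lam *\<^sub>R (pv, p1, p2) - Im lam *\<^sub>R (qv, q1, q2)"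
    and Eq: "antithetic_jacobian (\<lambda>v. J *v v) k \<theta> g c a b (qv, q1, q2) =
      Im lam *\<^sub>R (pv, p1, p2) + Re lam *\<^sub>R (qv, q1, q2)"
    unfolding complex_eigenvalue_def split_paired_Ex by blast
  define \<sigma> where "\<sigma> = Re lam"
  define \<omega> where "\<omega> = Im lam"
  have plant: "J *v pv - (g * pv $ k + c * p2) *\<^sub>R axis k 1 = \<sigma> *\<^sub>R pv - \<omega> *\<^sub>R qv"
      "J *v qv - (g * qv $ k + c * q2) *\<^sub>R axis k 1 = \<omega> *\<^sub>R pv + \<sigma> *\<^sub>R qv"
    and controller: "\<sigma> * p1 - \<omega> * q1 = - (a * p1 + b * p2)"
      "\<omega> * p1 + \<sigma> * q1 = - (a * q1 + b * q2)"
      "\<sigma> * p2 - \<omega> * q2 = \<theta> * pv $ k - (a * p1 + b * p2)"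
      "\<omega> * p2 + \<sigma> * q2 = \<theta> * qv $ k - (a * q1 + b * q2)"
    using Ep Eq by (simp_all add: antithetic_jacobian_def \<sigma>_def \<omega>_def)
  show "Re lam < 0"
  proof (rule ccontr)
    assume "\<not> Re lam < 0"
    then have "0 \<le> \<sigma>" by (simp add: \<sigma>_def)
    define V where "V i = Complex (pv $ i) (qv $ i)" for i
    define w where "w i = (if i = k then - (of_real g * V k + of_real c * Complex p2 q2) else 0)" for i
    have rows: "lam * V i = (\<Sum>j\<in>UNIV. of_real (J$i$j) * V j) + w i" for i
      using arg_cong[OF plant(1), of "\<lambda>v. v $ i"] arg_cong[OF plant(2), of "\<lambda>v. v $ i"]
      by (simp add: complex_eq_iff \<sigma>_def \<omega>_def V_def w_def Re_sum Im_sum matrix_vector_mult_def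
          axis_def algebra_simps split: if_splits)
    have "0 \<le> p2 * pv $ k + q2 * qv $ k"
      by (rule antithetic_controller_passive[OF gains(4,5,1) \<open>0 \<le> \<sigma>\<close> controller])
    then have "0 \<le> g * ((pv $ k)\<^sup>2 + (qv $ k)\<^sup>2) + c * (p2 * pv $ k + q2 * qv $ k)"
      using gains(2,3) by simp
    then have "Re (w i * cnj (V i)) \<le> 0" for i
      by (simp add: w_def V_def power2_eq_square algebra_simps)
    then have "V i = 0" for i
      using metzler_hurwitz_dissipative_forcing[OF metz hur, of lam V w] \<open>0 \<le> \<sigma>\<close> rows
      by (simp add: \<sigma>_def)
    then have "pv = 0" "qv = 0"
      by (simp_all add: V_def vec_eq_iff complex_eq_iff)
    then have "p2 = 0" "q2 = 0"
      using arg_cong[OF plant(1), of "\<lambda>v. v $ k"] arg_cong[OF plant(2), of "\<lambda>v. v $ k"] gains(3)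
      by simp_all
    with controller(1,2) have "(\<sigma> + a) * (p1\<^sup>2 + q1\<^sup>2) = 0"
      by algebra
    then have "p1 = 0" "q1 = 0"
      using \<open>0 \<le> \<sigma>\<close> gains(4) by (simp_all add: sum_power2_eq_zero_iff)
    with nz \<open>pv = 0\<close> \<open>qv = 0\<close> \<open>p2 = 0\<close> \<open>q2 = 0\<close> show False
      by (simp add: zero_prod_def)
  qed
qed

lemma antithetic_closed_loop_equilibrium:
  assumes "f xs - (u * (\<mu> / \<theta>)) *\<^sub>R axis k 1 + b0 = 0" "xs $ k = \<mu> / \<theta>"
    and "0 < \<theta>" "0 < \<eta>" "0 < kp" "0 < u"
  shows "antithetic_closed_loop f k b0 \<mu> \<theta> \<eta> kp (xs, \<mu> / (\<eta> * u), u / kp) = 0"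
proof -
  have "kp * xs $ k * (u / kp) = u * (\<mu> / \<theta>)" "\<eta> * kp * (\<mu> / (\<eta> * u)) * (u / kp) = \<mu>"
    "\<theta> * xs $ k = \<mu>"
    using assms(2-6) by simp_all
  with assms(1) show ?thesis
    by (simp add: antithetic_closed_loop_def zero_prod_def)
qed

lemma loc_exp_stable_antithetic_closed_loop:
  assumes deriv: "(f has_derivative A) (at xs)"
    and metz: "metzler (matrix A)" and hur: "hurwitz_mat (matrix A)"
    and eq: "f xs - (u * (\<mu> / \<theta>)) *\<^sub>R axis k 1 + b0 = 0" and xsk: "xs $ k = \<mu> / \<theta>"
    and pos: "0 < \<mu>" "0 < \<theta>" "0 < u" "0 < \<eta>" "0 < kp"
  shows "loc_exp_stable (antithetic_closed_loop f k b0 \<mu> \<theta> \<eta> kp) (xs, \<mu> / (\<eta> * u), u / kp)"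
proof -
  define z1 z2 where "z1 = \<mu> / (\<eta> * u)" and "z2 = u / kp"
  have "0 < z1" "0 < z2"
    using pos by (simp_all add: z1_def z2_def)
  have "A = (\<lambda>v. matrix A *v v)"
    using deriv by (simp add: has_derivative_bounded_linear)
  then have "hurwitz_lin (antithetic_jacobian A k \<theta> (kp * z2) (kp * xs $ k) (\<eta> * kp * z2) (\<eta> * kp * z1))"
    using hurwitz_antithetic_jacobian[OF metz hur] \<open>0 < z1\<close> \<open>0 < z2\<close> pos xsk by simp
  moreover have "antithetic_closed_loop f k b0 \<mu> \<theta> \<eta> kp (xs, z1, z2) = 0"
    unfolding z1_def z2_def
    using antithetic_closed_loop_equilibrium[where f = f and xs = xs, OF eq xsk] pos by simp
  ultimately show ?thesis
    unfolding loc_exp_stable_def z1_def[symmetric] z2_def[symmetric]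
    using has_derivative_antithetic_closed_loop[OF deriv] by blast
qed

theorem mainTheorem15:
  fixes f :: "real^'n \<Rightarrow> real^'n" and f' :: "real^'n \<Rightarrow> real^'n \<Rightarrow> real^'n"
    and k :: 'n and b0 xs :: "real^'n" and \<mu> \<theta> u :: real
  assumes deriv: "\<And>x. (f has_derivative f' x) (at x)"
    and cont: "continuous_on UNIV (\<lambda>x. matrix (f' x))"
    and b0: "\<forall>i. 0 \<le> b0 $ i"
    and mu: "\<mu> > 0" and theta: "\<theta> > 0"
    and xs: "\<forall>i. 0 \<le> xs $ i" and u: "u > 0"
    and xsk: "xs $ k = \<mu> / \<theta>"
    and eq: "f xs - (u * (\<mu> / \<theta>)) *\<^sub>R axis k 1 + b0 = 0"
    and metz: "metzler (matrix (f' xs))"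
    and hur: "hurwitz_mat (matrix (f' xs))"
  shows "\<forall>\<eta> kp. \<eta> > 0 \<longrightarrow> kp > 0 \<longrightarrow>
    loc_exp_stable
      (\<lambda>(x::real^'n, z1::real, z2::real).
         (f x - (kp * x $ k * z2) *\<^sub>R axis k 1 + b0,
          \<mu> - \<eta> * kp * z1 * z2,
          \<theta> * x $ k - \<eta> * kp * z1 * z2))
      (xs, \<mu> / (\<eta> * u), u / kp)"
  using loc_exp_stable_antithetic_closed_loop[OF deriv metz hur eq xsk mu theta u]
  unfolding antithetic_closed_loop_def by blast

end
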